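(* Let $G$ be a graph, $S\subseteq V(G)$, $k$ an integer, and let $\mathcal{C}$ be the set of all inclusion-wise maximal chips. For $C_1,C_2\in\mathcal{C}$ with $C_1\neq C_2$, $C_1$ touches $C_2$ if and only if $N(C_1) \cap C_2 \neq \emptyset$.
   Context: $N(C)$ is the set of vertices outside $C$ with a neighbour in $C$. For $X,Y\subseteq V(G)$, a set $W$ is an $X-Y$ separator if no connected component of $G\setminus W$ contains both a vertex of $X$ and a vertex of $Y$. $R_H(Z)$ denotes the set of vertices reachable from $Z$ in $H$. An inclusion-wise minimal $X-Y$ separator $W$ is an important $X-Y$ separator if there is no $X-Y$ separator $W'$ with $|W'|\le|W|$ and $R_{G\setminus W}(X\setminus W)\subsetneq R_{G\setminus W'}(X\setminus W')$. For fixed $S$ and $k$, a set $C\subseteq V(G)$ is a chip if $G[C]$ is connected, $|N(C)|\le 3k$, and $N(C)$ is an important $C-S$ separator. Two distinct chips $C_1,C_2\in\mathcal{C}$ touch if $C_1\cap C_2\neq\emptyset$ or there is an edge with one endpoint in $C_1$ and the other in $C_2$. *)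

theory Defs
  imports Main
begin

definition graph :: "'a set \<Rightarrow> ('a \<Rightarrow> 'a \<Rightarrow> bool) \<Rightarrow> bool" where
  "graph V E \<longleftrightarrow> finite V \<and> (\<forall>u v. E u v \<longrightarrow> u \<in> V \<and> v \<in> V)
     \<and> (\<forall>u v. E u v \<longrightarrow> E v u) \<and> (\<forall>u. \<not> E u u)"

definition reach :: "('a \<Rightarrow> 'a \<Rightarrow> bool) \<Rightarrow> 'a set \<Rightarrow> 'a \<Rightarrow> 'a \<Rightarrow> bool" where
  "reach E U u v \<longleftrightarrow> u \<in> U \<and> v \<in> U \<and> (\<lambda>x y. x \<in> U \<and> y \<in> U \<and> E x y)\<^sup>*\<^sup>* u v"

definition connected_on :: "('a \<Rightarrow> 'a \<Rightarrow> bool) \<Rightarrow> 'a set \<Rightarrow> bool" where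
  "connected_on E C \<longleftrightarrow> C \<noteq> {} \<and> (\<forall>u\<in>C. \<forall>v\<in>C. reach E C u v)"

definition nbhd :: "'a set \<Rightarrow> ('a \<Rightarrow> 'a \<Rightarrow> bool) \<Rightarrow> 'a set \<Rightarrow> 'a set" where
  "nbhd V E C = {v \<in> V - C. \<exists>u\<in>C. E u v}"

definition reach_set :: "'a set \<Rightarrow> ('a \<Rightarrow> 'a \<Rightarrow> bool) \<Rightarrow> 'a set \<Rightarrow> 'a set \<Rightarrow> 'a set" where
  "reach_set V E W Z = {v. \<exists>z\<in>Z. reach E (V - W) z v}"

definition separator :: "'a set \<Rightarrow> ('a \<Rightarrow> 'a \<Rightarrow> bool) \<Rightarrow> 'a set \<Rightarrow> 'a set \<Rightarrow> 'a set \<Rightarrow> bool" where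
  "separator V E X Y W \<longleftrightarrow> W \<subseteq> V \<and>
     \<not> (\<exists>x\<in>X - W. \<exists>y\<in>Y - W. reach E (V - W) x y)"

definition min_separator :: "'a set \<Rightarrow> ('a \<Rightarrow> 'a \<Rightarrow> bool) \<Rightarrow> 'a set \<Rightarrow> 'a set \<Rightarrow> 'a set \<Rightarrow> bool" where
  "min_separator V E X Y W \<longleftrightarrow> separator V E X Y W \<and>
     (\<forall>W'. W' \<subset> W \<longrightarrow> \<not> separator V E X Y W')"

definition important_separator :: "'a set \<Rightarrow> ('a \<Rightarrow> 'a \<Rightarrow> bool) \<Rightarrow> 'a set \<Rightarrow> 'a set \<Rightarrow> 'a set \<Rightarrow> bool" where
  "important_separator V E X Y W \<longleftrightarrow> min_separator V E X Y W \<and>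
     \<not> (\<exists>W'. separator V E X Y W' \<and> card W' \<le> card W \<and>
            reach_set V E W (X - W) \<subset> reach_set V E W' (X - W'))"

definition chip :: "'a set \<Rightarrow> ('a \<Rightarrow> 'a \<Rightarrow> bool) \<Rightarrow> 'a set \<Rightarrow> int \<Rightarrow> 'a set \<Rightarrow> bool" where
  "chip V E S k C \<longleftrightarrow> C \<subseteq> V \<and> connected_on E C \<and> int (card (nbhd V E C)) \<le> 3 * k \<and>
     important_separator V E C S (nbhd V E C)"

definition maximal_chips :: "'a set \<Rightarrow> ('a \<Rightarrow> 'a \<Rightarrow> bool) \<Rightarrow> 'a set \<Rightarrow> int \<Rightarrow> 'a set set" where
  "maximal_chips V E S k = {C. chip V E S k C \<and> \<not> (\<exists>C'. chip V E S k C' \<and> C \<subset> C')}"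

definition touch :: "('a \<Rightarrow> 'a \<Rightarrow> bool) \<Rightarrow> 'a set \<Rightarrow> 'a set \<Rightarrow> bool" where
  "touch E C1 C2 \<longleftrightarrow> C1 \<inter> C2 \<noteq> {} \<or> (\<exists>u\<in>C1. \<exists>v\<in>C2. E u v)"

end

theory Submission
  imports Defs
begin

text \<open>Maximality of C2 forbids C2 \<subset> C1, so C2 leaves C1; where C2 meets or is adjacent to C1,
  a path inside the connected set C2 must therefore cross from C1 into N(C1).\<close>

lemma rtranclp_leaves_set:
  assumes "R\<^sup>*\<^sup>* a b" "a \<in> A" "b \<notin> A"
  shows "\<exists>x y. x \<in> A \<and> y \<notin> A \<and> R x y"
  using assms
proof (induction rule: rtranclp_induct)
  case base
  then show ?case by simp
next
  case (step b c)
  then show ?case by (cases "b \<in> A") auto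
qed

lemma connected_on_meets_nbhd:
  assumes conn: "connected_on E C" and "C \<subseteq> V"
    and meets: "C \<inter> D \<noteq> {}" and not_sub: "\<not> C \<subseteq> D"
  shows "nbhd V E D \<inter> C \<noteq> {}"
proof -
  obtain a where a: "a \<in> C" "a \<in> D" using meets by auto
  obtain b where b: "b \<in> C" "b \<notin> D" using not_sub by auto
  have "(\<lambda>x y. x \<in> C \<and> y \<in> C \<and> E x y)\<^sup>*\<^sup>* a b"
    using conn a b unfolding connected_on_def reach_def by auto
  from rtranclp_leaves_set[OF this a(2) b(2)]
  obtain x y where "x \<in> D" "y \<notin> D" "x \<in> C" "y \<in> C" "E x y" by auto
  then have "y \<in> nbhd V E D \<inter> C" using \<open>C \<subseteq> V\<close> unfolding nbhd_def by auto
  then show ?thesis by auto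
qed

lemma touch_iff_nbhd_meets:
  assumes "connected_on E C2" "C2 \<subseteq> V" and not_sub: "\<not> C2 \<subseteq> C1"
  shows "touch E C1 C2 \<longleftrightarrow> nbhd V E C1 \<inter> C2 \<noteq> {}"
proof
  assume "nbhd V E C1 \<inter> C2 \<noteq> {}"
  then show "touch E C1 C2" unfolding nbhd_def touch_def by blast
next
  have meets: "nbhd V E C1 \<inter> C2 \<noteq> {}" if "C2 \<inter> C1 \<noteq> {}"
    using connected_on_meets_nbhd[OF assms(1,2) that not_sub] .
  assume "touch E C1 C2"
  then consider "C1 \<inter> C2 \<noteq> {}" | u v where "u \<in> C1" "v \<in> C2" "E u v"
    unfolding touch_def by blast
  then show "nbhd V E C1 \<inter> C2 \<noteq> {}"
  proof cases
    case 1
    then show ?thesis using meets by blast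
  next
    case (2 u v)
    show ?thesis
    proof (cases "v \<in> C1")
      case True
      then show ?thesis using meets 2 by blast
    next
      case False
      then have "v \<in> nbhd V E C1" using 2 \<open>C2 \<subseteq> V\<close> unfolding nbhd_def by auto
      then show ?thesis using 2 by blast
    qed
  qed
qed

lemma maximal_chips_not_subset:
  assumes "C1 \<in> maximal_chips V E S k" "C2 \<in> maximal_chips V E S k" "C1 \<noteq> C2"
  shows "\<not> C2 \<subseteq> C1"
  using assms unfolding maximal_chips_def by blast

theorem lemma3p6:
  fixes V :: "'a set" and E :: "'a \<Rightarrow> 'a \<Rightarrow> bool" and S :: "'a set" and k :: int
  assumes "graph V E" and "S \<subseteq> V"
    and "C1 \<in> maximal_chips V E S k" and "C2 \<in> maximal_chips V E S k" and "C1 \<noteq> C2"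
  shows "touch E C1 C2 \<longleftrightarrow> nbhd V E C1 \<inter> C2 \<noteq> {}"
proof -
  have "chip V E S k C2" using assms(4) unfolding maximal_chips_def by blast
  then have "connected_on E C2" "C2 \<subseteq> V" unfolding chip_def by auto
  then show ?thesis
    using touch_iff_nbhd_meets maximal_chips_not_subset[OF assms(3-5)] by blast
qed

end
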